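(* Let $T$ be a tree (without loops), $v$ a vertex of $T$ with neighbours $w_1,\dots,w_s$, and let $T_i$ be the connected component of $T\setminus v$ containing $w_i$. Then $\nu_2(T)-\nu_2(T\setminus v)\in\{0,1,2\}$ and: (i) $\nu_2(T)-\nu_2(T\setminus v)=2$ if and only if $v$ is saturated in $T$; (ii) $\nu_2(T)-\nu_2(T\setminus v)=1$ if and only if there exists $1\leq j\leq s$ such that the edge $vw_j$ is saturated in $T$ and $w_i$ is saturated in $T_i$ for all $i\neq j$; (iii) $\nu_2(T)-\nu_2(T\setminus v)=0$ if and only if $w_i$ is saturated in $T_i$ for all $1\leq i\leq s$.
   Context: A $2$-matching of a graph $G$ is a set of edges such that every vertex is incident to at most two of them; $\nu_2(G)$ is the maximum size of a $2$-matching and a $2$-matching of that size is called maximum. A vertex $w$ is saturated in $G$ if every maximum $2$-matching of $G$ has exactly two edges incident to $w$; an edge is saturated in $G$ if it belongs to every maximum $2$-matching of $G$. $T\setminus v$ denotes $T$ with the vertex $v$ and its incident edges deleted. *)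

theory Defs
  imports Main
begin

definition simple_graph :: "'a set \<Rightarrow> 'a set set \<Rightarrow> bool" where
  "simple_graph V E \<longleftrightarrow> finite V \<and> (\<forall>e\<in>E. \<exists>x y. x \<noteq> y \<and> x \<in> V \<and> y \<in> V \<and> e = {x, y})"

definition adj_rel :: "'a set set \<Rightarrow> ('a \<times> 'a) set" where
  "adj_rel E = {(x, y). {x, y} \<in> E}"

definition connected_graph :: "'a set \<Rightarrow> 'a set set \<Rightarrow> bool" where
  "connected_graph V E \<longleftrightarrow> (\<forall>x\<in>V. \<forall>y\<in>V. (x, y) \<in> (adj_rel E)\<^sup>*)"

definition has_cycle :: "'a set set \<Rightarrow> bool" where
  "has_cycle E \<longleftrightarrow> (\<exists>xs. length xs \<ge> 3 \<and> distinct xs \<and>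
      (\<forall>i < length xs. {xs ! i, xs ! ((i + 1) mod length xs)} \<in> E))"

definition is_tree :: "'a set \<Rightarrow> 'a set set \<Rightarrow> bool" where
  "is_tree V E \<longleftrightarrow> simple_graph V E \<and> V \<noteq> {} \<and> connected_graph V E \<and> \<not> has_cycle E"

definition neighbours :: "'a set set \<Rightarrow> 'a \<Rightarrow> 'a set" where
  "neighbours E v = {w. {v, w} \<in> E}"

definition deg_in :: "'a set set \<Rightarrow> 'a \<Rightarrow> nat" where
  "deg_in M v = card {e \<in> M. v \<in> e}"

definition is_2matching :: "'a set set \<Rightarrow> 'a set set \<Rightarrow> bool" where
  "is_2matching E M \<longleftrightarrow> M \<subseteq> E \<and> (\<forall>v. deg_in M v \<le> 2)"

definition nu2 :: "'a set set \<Rightarrow> nat" where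
  "nu2 E = Max {card M | M. is_2matching E M}"

definition max_2matching :: "'a set set \<Rightarrow> 'a set set \<Rightarrow> bool" where
  "max_2matching E M \<longleftrightarrow> is_2matching E M \<and> card M = nu2 E"

definition saturated_vertex :: "'a set set \<Rightarrow> 'a \<Rightarrow> bool" where
  "saturated_vertex E w \<longleftrightarrow> (\<forall>M. max_2matching E M \<longrightarrow> deg_in M w = 2)"

definition saturated_edge :: "'a set set \<Rightarrow> 'a set \<Rightarrow> bool" where
  "saturated_edge E e \<longleftrightarrow> (\<forall>M. max_2matching E M \<longrightarrow> e \<in> M)"

definition del_vertex_V :: "'a set \<Rightarrow> 'a \<Rightarrow> 'a set" where
  "del_vertex_V V v = V - {v}"

definition del_vertex_E :: "'a set set \<Rightarrow> 'a \<Rightarrow> 'a set set" where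
  "del_vertex_E E v = {e \<in> E. v \<notin> e}"

definition comp_V :: "'a set \<Rightarrow> 'a set set \<Rightarrow> 'a \<Rightarrow> 'a set" where
  "comp_V V E w = {u \<in> V. (w, u) \<in> (adj_rel E)\<^sup>*}"

definition comp_E :: "'a set \<Rightarrow> 'a set set \<Rightarrow> 'a \<Rightarrow> 'a set set" where
  "comp_E V E w = {e \<in> E. e \<subseteq> comp_V V E w}"

end

theory Submission
  imports Defs "HOL-Library.Transitive_Closure_Table"
begin

(* The only property of trees used is that v separates its neighbours: the branches T_i are
   vertex-disjoint, so nu2 (T \ v) is the sum of the nu2 (T_i).  A 2-matching
   of T is a 2-matching of T \ v plus at most two edges v w_i, and adding v w_i costs an edge
   inside T_i exactly when w_i is saturated in T_i.  Hence nu2 T - nu2 (T \ v) = min 2 |U|,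
   where U is the set of neighbours w_i not saturated in T_i, and (i)-(iii) are the cases
   |U| >= 2, |U| = 1 and U = {}. *)

lemma deg_in_mono: "finite M \<Longrightarrow> M' \<subseteq> M \<Longrightarrow> deg_in M' x \<le> deg_in M x"
  unfolding deg_in_def by (rule card_mono) auto

lemma deg_in_Un_le: "deg_in (M \<union> M') x \<le> deg_in M x + deg_in M' x"
proof -
  have "{e \<in> M \<union> M'. x \<in> e} = {e \<in> M. x \<in> e} \<union> {e \<in> M'. x \<in> e}" by auto
  then show ?thesis unfolding deg_in_def by (metis card_Un_le)
qed

lemma inj_on_doubleton: "inj_on (\<lambda>i. {v, i}) X"
  by (rule inj_onI) (auto simp: doubleton_eq_iff)

lemma deg_in_star:
  assumes "finite G" and "v \<notin> G"
  shows "deg_in ((\<lambda>i. {v, i}) ` G) x = (if x = v then card G else if x \<in> G then 1 else 0)"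
proof -
  have "{e \<in> (\<lambda>i. {v, i}) ` G. x \<in> e} =
      (if x = v then (\<lambda>i. {v, i}) ` G else if x \<in> G then {{v, x}} else {})"
    using assms(2) by auto
  then show ?thesis unfolding deg_in_def by (simp add: card_image inj_on_doubleton)
qed

lemma finite_2matching: "finite X \<Longrightarrow> is_2matching X M \<Longrightarrow> finite M"
  unfolding is_2matching_def using finite_subset by blast

lemma is_2matching_subset:
  "is_2matching X M \<Longrightarrow> finite M \<Longrightarrow> M' \<subseteq> M \<Longrightarrow> M' \<subseteq> Y \<Longrightarrow> is_2matching Y M'"
  unfolding is_2matching_def by (meson deg_in_mono le_trans)

lemma finite_2matching_cards: "finite X \<Longrightarrow> finite {card M | M. is_2matching X M}"
proof -
  assume "finite X"
  moreover have "{card M | M. is_2matching X M} \<subseteq> card ` Pow X"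
    unfolding is_2matching_def by auto
  ultimately show ?thesis using finite_subset by blast
qed

lemma is_2matching_empty: "is_2matching X {}"
  unfolding is_2matching_def deg_in_def by simp

lemma card_le_nu2: "finite X \<Longrightarrow> is_2matching X M \<Longrightarrow> card M \<le> nu2 X"
  unfolding nu2_def by (rule Max_ge) (auto intro: finite_2matching_cards)

lemma max_2matching_exists: "finite X \<Longrightarrow> \<exists>M. max_2matching X M"
proof -
  assume "finite X"
  then have "nu2 X \<in> {card M | M. is_2matching X M}"
    unfolding nu2_def using finite_2matching_cards is_2matching_empty by (intro Max_in) auto
  then show ?thesis unfolding max_2matching_def by auto
qed

section \<open>Graphs in which a vertex separates its neighbours\<close>

text \<open>branch i is the paper's T_i; the sets C i stand for its vertex sets.\<close>

locale separating_vertex =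
  fixes E :: "'a set set" and v :: 'a and C :: "'a \<Rightarrow> 'a set"
  assumes finite_edges: "finite E"
    and edge_doubleton: "e \<in> E \<Longrightarrow> \<exists>x y. x \<noteq> y \<and> e = {x, y}"
    and edge_in_part: "e \<in> del_vertex_E E v \<Longrightarrow> \<exists>i\<in>neighbours E v. e \<subseteq> C i"
    and neighbour_in_part: "i \<in> neighbours E v \<Longrightarrow> i \<in> C i"
    and parts_disjoint:
      "i \<in> neighbours E v \<Longrightarrow> j \<in> neighbours E v \<Longrightarrow> i \<noteq> j \<Longrightarrow> C i \<inter> C j = {}"
begin

abbreviation nbrs :: "'a set" where "nbrs \<equiv> neighbours E v"

definition branch :: "'a \<Rightarrow> 'a set set" where
  "branch i = {e \<in> del_vertex_E E v. e \<subseteq> C i}"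

definition unsat_nbrs :: "'a set" where
  "unsat_nbrs = {i \<in> nbrs. \<not> saturated_vertex (branch i) i}"

definition matched_nbrs :: "'a set set \<Rightarrow> 'a set" where
  "matched_nbrs M = {i \<in> nbrs. {v, i} \<in> M}"

definition nu2_branches :: nat where
  "nu2_branches = (\<Sum>i\<in>nbrs. nu2 (branch i))"

lemma v_notin_nbrs: "v \<notin> nbrs"
  unfolding neighbours_def using edge_doubleton by fastforce

lemma finite_nbrs: "finite nbrs"
proof -
  have "nbrs \<subseteq> \<Union> E" unfolding neighbours_def by auto
  moreover have "finite (\<Union> E)" using finite_edges edge_doubleton by auto
  ultimately show ?thesis using finite_subset by blast
qed

lemma finite_unsat_nbrs: "finite unsat_nbrs"
  unfolding unsat_nbrs_def using finite_nbrs by simp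

lemma branch_subset: "branch i \<subseteq> del_vertex_E E v"
  unfolding branch_def by auto

lemma finite_branch: "finite (branch i)"
  using branch_subset finite_edges finite_subset unfolding del_vertex_E_def by fastforce

lemma branches_disjoint: "i \<in> nbrs \<Longrightarrow> j \<in> nbrs \<Longrightarrow> i \<noteq> j \<Longrightarrow> branch i \<inter> branch j = {}"
  unfolding branch_def del_vertex_E_def using parts_disjoint edge_doubleton by fastforce

lemma del_vertex_E_eq_UN_branches: "del_vertex_E E v = (\<Union>i\<in>nbrs. branch i)"
  unfolding branch_def using edge_in_part by auto

lemma incident_edges_v: "{e \<in> E. v \<in> e} = (\<lambda>i. {v, i}) ` nbrs"
proof (intro equalityI subsetI)
  fix e assume e: "e \<in> {e \<in> E. v \<in> e}"
  then obtain i where "e = {v, i}" using edge_doubleton by blast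
  then show "e \<in> (\<lambda>i. {v, i}) ` nbrs" using e unfolding neighbours_def by auto
qed (auto simp: neighbours_def)

lemma incident_edges_v_subset:
  assumes "M \<subseteq> E"
  shows "{e \<in> M. v \<in> e} = (\<lambda>i. {v, i}) ` matched_nbrs M"
proof -
  have "{e \<in> M. v \<in> e} = M \<inter> {e \<in> E. v \<in> e}" using assms by blast
  also have "\<dots> = (\<lambda>i. {v, i}) ` matched_nbrs M" unfolding incident_edges_v matched_nbrs_def by auto
  finally show ?thesis .
qed

lemma deg_in_v: "M \<subseteq> E \<Longrightarrow> deg_in M v = card (matched_nbrs M)"
  unfolding deg_in_def by (simp add: incident_edges_v_subset card_image inj_on_doubleton)

lemma card_2matching_split:
  assumes "M \<subseteq> E"
  shows "card M = (\<Sum>i\<in>nbrs. card (M \<inter> branch i)) + card (matched_nbrs M)"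
proof -
  have fin: "finite M" using assms finite_edges finite_subset by blast
  have "M = (M \<inter> del_vertex_E E v) \<union> {e \<in> M. v \<in> e}"
    using assms unfolding del_vertex_E_def by blast
  moreover have "(M \<inter> del_vertex_E E v) \<inter> {e \<in> M. v \<in> e} = {}"
    unfolding del_vertex_E_def by blast
  ultimately have "card M = card (M \<inter> del_vertex_E E v) + deg_in M v"
    unfolding deg_in_def using fin by (metis card_Un_disjoint finite_Un)
  moreover have "card (M \<inter> del_vertex_E E v) = (\<Sum>i\<in>nbrs. card (M \<inter> branch i))"
    unfolding del_vertex_E_eq_UN_branches Int_UN_distrib
    using finite_nbrs fin branches_disjoint by (intro card_UN_disjoint) auto
  ultimately show ?thesis using deg_in_v[OF assms] by simp
qed

text \<open>The edge {v, i} leaves room for only one edge at i inside the branch.\<close>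

lemma card_Int_branch_less:
  assumes M: "is_2matching E M" and "i \<in> nbrs" "{v, i} \<in> M"
    and sat: "saturated_vertex (branch i) i"
  shows "card (M \<inter> branch i) < nu2 (branch i)"
proof -
  have fin: "finite M" using M finite_2matching finite_edges by blast
  have Mi: "is_2matching (branch i) (M \<inter> branch i)"
    using is_2matching_subset[OF M fin] by blast
  have "{e \<in> M \<inter> branch i. i \<in> e} \<subseteq> {e \<in> M. i \<in> e} - {{v, i}}"
    using branch_subset unfolding del_vertex_E_def by auto
  then have "deg_in (M \<inter> branch i) i \<le> card ({e \<in> M. i \<in> e} - {{v, i}})"
    unfolding deg_in_def using fin by (intro card_mono) auto
  also have "\<dots> = deg_in M i - 1"
    unfolding deg_in_def using \<open>{v, i} \<in> M\<close> by (simp add: card_Diff_singleton)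
  also have "\<dots> < 2"
  proof -
    have "deg_in M i \<le> 2" using M unfolding is_2matching_def by blast
    then show ?thesis by linarith
  qed
  finally have "\<not> max_2matching (branch i) (M \<inter> branch i)"
    using sat unfolding saturated_vertex_def by auto
  then show ?thesis
    using card_le_nu2[OF finite_branch Mi] Mi
    unfolding max_2matching_def by (simp add: order_less_le)
qed

lemma card_2matching_le:
  assumes M: "is_2matching E M"
  shows "card M \<le> nu2_branches + card (matched_nbrs M \<inter> unsat_nbrs)"
proof -
  define S where "S = matched_nbrs M - unsat_nbrs"
  have S: "S \<subseteq> nbrs" unfolding S_def matched_nbrs_def by auto
  have bound: "card (M \<inter> branch i) + (if i \<in> S then 1 else 0) \<le> nu2 (branch i)"
    if "i \<in> nbrs" for i
  proof -
    have "card (M \<inter> branch i) \<le> nu2 (branch i)"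
      using M is_2matching_subset finite_2matching finite_edges
      by (intro card_le_nu2[OF finite_branch]) blast
    then show ?thesis
      using card_Int_branch_less[OF M that] unfolding S_def matched_nbrs_def unsat_nbrs_def by auto
  qed
  have "(\<Sum>i\<in>nbrs. if i \<in> S then 1 else 0::nat) = card S"
    using finite_nbrs S by (auto simp: sum.If_cases intro!: arg_cong[where f = card])
  moreover have "(\<Sum>i\<in>nbrs. card (M \<inter> branch i) + (if i \<in> S then 1 else 0)) \<le> nu2_branches"
    unfolding nu2_branches_def by (rule sum_mono) (rule bound)
  moreover have "card (matched_nbrs M) = card (matched_nbrs M \<inter> unsat_nbrs) + card S"
    unfolding S_def using finite_subset[OF _ finite_nbrs]
    by (intro card_Int_Diff) (auto simp: matched_nbrs_def)
  ultimately show ?thesis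
    using card_2matching_split M unfolding is_2matching_def by (simp add: sum.distrib)
qed

lemma deg_in_UN_branches:
  assumes "\<And>i. i \<in> nbrs \<Longrightarrow> Mb i \<subseteq> branch i" and "k \<in> nbrs" and "x \<in> C k"
  shows "deg_in (\<Union>i\<in>nbrs. Mb i) x = deg_in (Mb k) x"
proof -
  have "{e \<in> (\<Union>i\<in>nbrs. Mb i). x \<in> e} = {e \<in> Mb k. x \<in> e}"
    using assms parts_disjoint unfolding branch_def by blast
  then show ?thesis unfolding deg_in_def by simp
qed

lemma deg_in_UN_branches_outside:
  assumes "\<And>i. i \<in> nbrs \<Longrightarrow> Mb i \<subseteq> branch i" and "\<forall>k\<in>nbrs. x \<notin> C k"
  shows "deg_in (\<Union>i\<in>nbrs. Mb i) x = 0"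
proof -
  have "{e \<in> (\<Union>i\<in>nbrs. Mb i). x \<in> e} = {}"
    using assms unfolding branch_def by blast
  then show ?thesis unfolding deg_in_def by (simp only: card.empty)
qed

lemma exists_branch_2matching:
  assumes "i \<in> nbrs"
  shows "\<exists>Mi. max_2matching (branch i) Mi \<and> (i \<in> unsat_nbrs \<longrightarrow> deg_in Mi i \<le> 1)"
proof (cases "i \<in> unsat_nbrs")
  case True
  then obtain Mi where Mi: "max_2matching (branch i) Mi" "deg_in Mi i \<noteq> 2"
    unfolding unsat_nbrs_def saturated_vertex_def by auto
  then have "deg_in Mi i \<le> 2" unfolding max_2matching_def is_2matching_def by blast
  then show ?thesis using Mi by auto
next
  case False
  then show ?thesis using max_2matching_exists[OF finite_branch] by auto
qed

text \<open>The union of maximum 2-matchings of the branches, chosen so that every unsaturated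
  neighbour keeps a free slot.\<close>

lemma exists_branchwise_2matching:
  "\<exists>W. W \<subseteq> del_vertex_E E v \<and> card W = nu2_branches \<and> (\<forall>x. deg_in W x \<le> 2)
      \<and> (\<forall>x\<in>unsat_nbrs. deg_in W x \<le> 1)"
proof -
  have "\<forall>i\<in>nbrs. \<exists>Mi. max_2matching (branch i) Mi \<and> (i \<in> unsat_nbrs \<longrightarrow> deg_in Mi i \<le> 1)"
    using exists_branch_2matching by blast
  then have "\<exists>Mb. \<forall>i\<in>nbrs. max_2matching (branch i) (Mb i)
      \<and> (i \<in> unsat_nbrs \<longrightarrow> deg_in (Mb i) i \<le> 1)"
    by (rule bchoice)
  then obtain Mb where "\<forall>i\<in>nbrs. max_2matching (branch i) (Mb i)
      \<and> (i \<in> unsat_nbrs \<longrightarrow> deg_in (Mb i) i \<le> 1)"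
    by blast
  then have Mb: "\<And>i. i \<in> nbrs \<Longrightarrow> max_2matching (branch i) (Mb i)"
    and Mb_unsat: "\<And>i. i \<in> unsat_nbrs \<Longrightarrow> deg_in (Mb i) i \<le> 1"
    unfolding unsat_nbrs_def by auto
  have Mb_branch: "\<And>i. i \<in> nbrs \<Longrightarrow> Mb i \<subseteq> branch i"
    and Mb_deg: "\<And>i x. i \<in> nbrs \<Longrightarrow> deg_in (Mb i) x \<le> 2"
    using Mb unfolding max_2matching_def is_2matching_def by blast+
  define W where "W = (\<Union>i\<in>nbrs. Mb i)"
  have "W \<subseteq> del_vertex_E E v" unfolding W_def using Mb_branch branch_subset by blast
  moreover have "card W = nu2_branches"
  proof -
    have "\<forall>i\<in>nbrs. finite (Mb i)" using finite_subset[OF Mb_branch finite_branch] by blast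
    moreover have "\<forall>i\<in>nbrs. \<forall>j\<in>nbrs. i \<noteq> j \<longrightarrow> Mb i \<inter> Mb j = {}"
      using Mb_branch branches_disjoint by blast
    ultimately have "card W = (\<Sum>i\<in>nbrs. card (Mb i))"
      unfolding W_def using finite_nbrs by (simp add: card_UN_disjoint)
    then show ?thesis using Mb unfolding nu2_branches_def max_2matching_def by simp
  qed
  moreover have "deg_in W x \<le> 2" for x
  proof (cases "\<exists>k\<in>nbrs. x \<in> C k")
    case True
    then obtain k where "k \<in> nbrs" "x \<in> C k" by blast
    then show ?thesis using deg_in_UN_branches[OF Mb_branch] Mb_deg unfolding W_def by simp
  qed (simp add: W_def deg_in_UN_branches_outside[OF Mb_branch])
  moreover have "deg_in W x \<le> 1" if "x \<in> unsat_nbrs" for x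
  proof -
    have "x \<in> nbrs" using that unfolding unsat_nbrs_def by simp
    then show ?thesis
      using deg_in_UN_branches[OF Mb_branch] neighbour_in_part Mb_unsat[OF that]
      unfolding W_def by simp
  qed
  ultimately show ?thesis by blast
qed

lemma exists_2matching_with_matched:
  assumes "G \<subseteq> unsat_nbrs" and "card G \<le> 2"
  shows "\<exists>M. is_2matching E M \<and> card M = nu2_branches + card G \<and> matched_nbrs M = G"
proof -
  obtain W where W: "W \<subseteq> del_vertex_E E v" "card W = nu2_branches" "\<And>x. deg_in W x \<le> 2"
      "\<And>x. x \<in> unsat_nbrs \<Longrightarrow> deg_in W x \<le> 1"
    using exists_branchwise_2matching by blast
  have G: "G \<subseteq> nbrs" using assms(1) unfolding unsat_nbrs_def by auto
  have G': "finite G" "v \<notin> G" using finite_subset[OF G finite_nbrs] G v_notin_nbrs by auto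
  have finW: "finite W"
    using W(1) finite_edges unfolding del_vertex_E_def by (simp add: finite_subset)
  define M where "M = W \<union> (\<lambda>i. {v, i}) ` G"
  have disj: "W \<inter> (\<lambda>i. {v, i}) ` G = {}" using W(1) unfolding del_vertex_E_def by auto
  have "M \<subseteq> E" unfolding M_def using W(1) G unfolding neighbours_def del_vertex_E_def by auto
  moreover have "deg_in M x \<le> 2" for x
  proof -
    have "deg_in M x \<le> deg_in W x + deg_in ((\<lambda>i. {v, i}) ` G) x"
      unfolding M_def by (rule deg_in_Un_le)
    moreover have "{e \<in> W. v \<in> e} = {}" using W(1) unfolding del_vertex_E_def by blast
    then have "deg_in W v = 0" unfolding deg_in_def by (simp only: card.empty)
    ultimately show ?thesis
      using deg_in_star[OF G', of x] W(3)[of x] W(4)[of x] assms by (auto split: if_splits)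
  qed
  moreover have "card M = nu2_branches + card G"
    unfolding M_def using card_Un_disjoint[OF finW _ disj] G'(1) W(2)
    by (simp add: card_image inj_on_doubleton)
  moreover have "matched_nbrs M = G"
    using W(1) G unfolding matched_nbrs_def M_def del_vertex_E_def by (auto simp: doubleton_eq_iff)
  ultimately show ?thesis unfolding is_2matching_def by blast
qed

lemma nu2_del_vertex: "nu2 (del_vertex_E E v) = nu2_branches"
proof (rule antisym)
  have fin: "finite (del_vertex_E E v)" using finite_edges unfolding del_vertex_E_def by simp
  obtain M where M: "max_2matching (del_vertex_E E v) M" using max_2matching_exists[OF fin] by blast
  then have "is_2matching E M" "matched_nbrs M = {}"
    unfolding max_2matching_def is_2matching_def matched_nbrs_def del_vertex_E_def by auto
  then have "card M \<le> nu2_branches" using card_2matching_le by fastforce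
  then show "nu2 (del_vertex_E E v) \<le> nu2_branches" using M unfolding max_2matching_def by simp
next
  obtain M where M: "is_2matching E M" "card M = nu2_branches" "matched_nbrs M = {}"
    using exists_2matching_with_matched[of "{}"] by auto
  have "M \<subseteq> E" using M(1) unfolding is_2matching_def by simp
  then have "{e \<in> M. v \<in> e} = {}" using incident_edges_v_subset M(3) by simp
  then have "M \<subseteq> del_vertex_E E v"
    using \<open>M \<subseteq> E\<close> unfolding del_vertex_E_def by blast
  then have "is_2matching (del_vertex_E E v) M"
    using M(1) unfolding is_2matching_def by blast
  moreover have "finite (del_vertex_E E v)" using finite_edges unfolding del_vertex_E_def by simp
  ultimately show "nu2_branches \<le> nu2 (del_vertex_E E v)" using card_le_nu2 M(2) by metis
qed

lemma card_matched_nbrs_le: "is_2matching E M \<Longrightarrow> card (matched_nbrs M) \<le> 2"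
  using deg_in_v unfolding is_2matching_def by metis

lemma nu2_eq: "nu2 E = nu2_branches + min 2 (card unsat_nbrs)"
proof (rule antisym)
  obtain M where M: "max_2matching E M" using max_2matching_exists[OF finite_edges] by blast
  then have M2: "is_2matching E M" unfolding max_2matching_def by simp
  have fin: "finite (matched_nbrs M)" using finite_nbrs unfolding matched_nbrs_def by simp
  have "card (matched_nbrs M \<inter> unsat_nbrs) \<le> min 2 (card unsat_nbrs)"
    using card_matched_nbrs_le[OF M2] card_mono[OF fin, of "matched_nbrs M \<inter> unsat_nbrs"]
      card_mono[OF finite_unsat_nbrs, of "matched_nbrs M \<inter> unsat_nbrs"] by simp
  moreover have "nu2 E \<le> nu2_branches + card (matched_nbrs M \<inter> unsat_nbrs)"
    using card_2matching_le[OF M2] M unfolding max_2matching_def by simp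
  ultimately show "nu2 E \<le> nu2_branches + min 2 (card unsat_nbrs)" by linarith
next
  obtain G where "G \<subseteq> unsat_nbrs" "card G = min 2 (card unsat_nbrs)"
    using obtain_subset_with_card_n[of "min 2 (card unsat_nbrs)" unsat_nbrs] by auto
  moreover from this obtain M where "is_2matching E M" "card M = nu2_branches + card G"
    using exists_2matching_with_matched[of G] by auto
  ultimately show "nu2_branches + min 2 (card unsat_nbrs) \<le> nu2 E"
    using card_le_nu2[OF finite_edges] by metis
qed

lemma max_2matching_matched_unsat_ge:
  assumes "max_2matching E M"
  shows "min 2 (card unsat_nbrs) \<le> card (matched_nbrs M \<inter> unsat_nbrs)"
proof -
  have "nu2_branches + min 2 (card unsat_nbrs)
      \<le> nu2_branches + card (matched_nbrs M \<inter> unsat_nbrs)"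
    using assms card_2matching_le unfolding max_2matching_def nu2_eq by metis
  then show ?thesis by simp
qed

lemma obtain_max_2matching_matched_eq_unsat:
  assumes "card unsat_nbrs \<le> 1"
  obtains M where "max_2matching E M" "matched_nbrs M = unsat_nbrs"
proof -
  obtain M where M: "is_2matching E M" "card M = nu2_branches + card unsat_nbrs"
      "matched_nbrs M = unsat_nbrs"
    using exists_2matching_with_matched[of unsat_nbrs] assms by auto
  then have "max_2matching E M" using assms unfolding max_2matching_def nu2_eq by simp
  then show thesis using M(3) that by blast
qed

lemma saturated_vertex_v_iff: "saturated_vertex E v \<longleftrightarrow> 2 \<le> card unsat_nbrs"
proof
  assume sat: "saturated_vertex E v"
  show "2 \<le> card unsat_nbrs"
  proof (rule ccontr)
    assume "\<not> 2 \<le> card unsat_nbrs"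
    then have "card unsat_nbrs \<le> 1" by simp
    then obtain M where M: "max_2matching E M" "matched_nbrs M = unsat_nbrs"
      by (rule obtain_max_2matching_matched_eq_unsat)
    then have "deg_in M v = card unsat_nbrs"
      using deg_in_v unfolding max_2matching_def is_2matching_def by simp
    then show False
      using sat M(1) \<open>\<not> 2 \<le> card unsat_nbrs\<close> unfolding saturated_vertex_def by auto
  qed
next
  assume "2 \<le> card unsat_nbrs"
  show "saturated_vertex E v" unfolding saturated_vertex_def
  proof (intro allI impI)
    fix M assume M: "max_2matching E M"
    then have "M \<subseteq> E" "card (matched_nbrs M) \<le> 2"
      using card_matched_nbrs_le unfolding max_2matching_def is_2matching_def by auto
    moreover have "card (matched_nbrs M \<inter> unsat_nbrs) \<le> card (matched_nbrs M)"
      using finite_nbrs unfolding matched_nbrs_def by (intro card_mono) auto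
    ultimately show "deg_in M v = 2"
      using max_2matching_matched_unsat_ge[OF M] \<open>2 \<le> card unsat_nbrs\<close> deg_in_v by simp
  qed
qed

lemma saturated_edge_iff:
  assumes "j \<in> nbrs"
  shows "saturated_edge E {v, j} \<and> (\<forall>i \<in> nbrs - {j}. saturated_vertex (branch i) i)
    \<longleftrightarrow> unsat_nbrs = {j}"
proof
  assume "saturated_edge E {v, j} \<and> (\<forall>i \<in> nbrs - {j}. saturated_vertex (branch i) i)"
  then have se: "saturated_edge E {v, j}" and "unsat_nbrs \<subseteq> {j}" unfolding unsat_nbrs_def by auto
  moreover have "unsat_nbrs \<noteq> {}"
  proof
    assume "unsat_nbrs = {}"
    then have "card unsat_nbrs \<le> 1" by simp
    then obtain M where "max_2matching E M" "matched_nbrs M = unsat_nbrs"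
      by (rule obtain_max_2matching_matched_eq_unsat)
    then show False
      using se assms \<open>unsat_nbrs = {}\<close> unfolding saturated_edge_def matched_nbrs_def by auto
  qed
  ultimately show "unsat_nbrs = {j}" by blast
next
  assume U: "unsat_nbrs = {j}"
  have "saturated_edge E {v, j}" unfolding saturated_edge_def
  proof (intro allI impI)
    fix M assume "max_2matching E M"
    then have "1 \<le> card (matched_nbrs M \<inter> {j})" using max_2matching_matched_unsat_ge U by fastforce
    then have "j \<in> matched_nbrs M" by (cases "j \<in> matched_nbrs M") auto
    then show "{v, j} \<in> M" unfolding matched_nbrs_def by simp
  qed
  then show "saturated_edge E {v, j} \<and> (\<forall>i \<in> nbrs - {j}. saturated_vertex (branch i) i)"
    using U unfolding unsat_nbrs_def by auto
qed

theorem nu2_del_vertex_diff: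
  defines "d \<equiv> int (nu2 E) - int (nu2 (del_vertex_E E v))"
  shows "d \<in> {0, 1, 2}
    \<and> (d = 2 \<longleftrightarrow> saturated_vertex E v)
    \<and> (d = 1 \<longleftrightarrow> (\<exists>j \<in> nbrs. saturated_edge E {v, j} \<and>
                    (\<forall>i \<in> nbrs - {j}. saturated_vertex (branch i) i)))
    \<and> (d = 0 \<longleftrightarrow> (\<forall>i \<in> nbrs. saturated_vertex (branch i) i))"
proof -
  have d: "d = int (min 2 (card unsat_nbrs))" unfolding d_def nu2_eq nu2_del_vertex by simp
  have "d = 1 \<longleftrightarrow> (\<exists>j. unsat_nbrs = {j})"
    using d card_1_singleton_iff[of unsat_nbrs] by (auto simp: min_def)
  also have "\<dots> \<longleftrightarrow> (\<exists>j \<in> nbrs. unsat_nbrs = {j})" unfolding unsat_nbrs_def by blast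
  also have "\<dots> \<longleftrightarrow> (\<exists>j \<in> nbrs. saturated_edge E {v, j} \<and>
                    (\<forall>i \<in> nbrs - {j}. saturated_vertex (branch i) i))"
    using saturated_edge_iff by blast
  finally have d1: "d = 1 \<longleftrightarrow> \<dots>" .
  have "d = 0 \<longleftrightarrow> unsat_nbrs = {}" using d finite_unsat_nbrs by (auto simp: min_def)
  also have "\<dots> \<longleftrightarrow> (\<forall>i \<in> nbrs. saturated_vertex (branch i) i)" unfolding unsat_nbrs_def by auto
  finally have d0: "d = 0 \<longleftrightarrow> \<dots>" .
  have "d \<in> {0, 1, 2}" "d = 2 \<longleftrightarrow> 2 \<le> card unsat_nbrs" using d by (auto simp: min_def)
  then show ?thesis using d1 d0 saturated_vertex_v_iff by blast
qed

end

section \<open>Trees\<close>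

lemma sym_adj_rel: "sym (adj_rel E)"
  unfolding adj_rel_def sym_def by (simp add: insert_commute)

lemma reaches_via_neighbour:
  assumes "(u, v) \<in> (adj_rel E)\<^sup>*" and "u \<noteq> v"
  shows "\<exists>i\<in>neighbours E v. (i, u) \<in> (adj_rel (del_vertex_E E v))\<^sup>*"
  using assms
proof (induction rule: converse_rtrancl_induct)
  case (step u u')
  have e: "{u, u'} \<in> E" using step(1) unfolding adj_rel_def by simp
  show ?case
  proof (cases "u' = v")
    case True
    then show ?thesis using e unfolding neighbours_def by (auto simp: insert_commute)
  next
    case False
    then obtain i where "i \<in> neighbours E v" "(i, u') \<in> (adj_rel (del_vertex_E E v))\<^sup>*"
      using step(3) by blast
    moreover have "(u', u) \<in> adj_rel (del_vertex_E E v)"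
      using e step(4) False unfolding del_vertex_E_def adj_rel_def by (simp add: insert_commute)
    ultimately show ?thesis by (meson rtrancl_into_rtrancl)
  qed
qed simp

lemma simple_graph_edgeD:
  assumes "simple_graph V E" and "{x, y} \<in> E"
  shows "x \<noteq> y \<and> x \<in> V \<and> y \<in> V"
proof -
  obtain a b where "a \<noteq> b" "a \<in> V" "b \<in> V" "{x, y} = {a, b}"
    using assms unfolding simple_graph_def by blast
  then show ?thesis by (auto simp: doubleton_eq_iff)
qed

text \<open>A path between two neighbours of v avoiding v closes a cycle through v.\<close>

lemma acyclic_neighbours_disconnected:
  assumes sg: "simple_graph V E" and nc: "\<not> has_cycle E"
    and iN: "i \<in> neighbours E v" and jN: "j \<in> neighbours E v" and "i \<noteq> j"
  shows "(i, j) \<notin> (adj_rel (del_vertex_E E v))\<^sup>*"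
proof
  define r where "r = (\<lambda>a b. (a, b) \<in> adj_rel (del_vertex_E E v))"
  assume "(i, j) \<in> (adj_rel (del_vertex_E E v))\<^sup>*"
  then have "r\<^sup>*\<^sup>* i j" unfolding r_def by (simp add: rtranclp_rtrancl_eq)
  then obtain ys0 where "rtrancl_path r i ys0 j" by (auto simp: rtranclp_eq_rtrancl_path)
  then obtain ys where p: "rtrancl_path r i ys j" and dis: "distinct (i # ys)"
    by (rule rtrancl_path_distinct)
  have ys: "ys \<noteq> []" using p \<open>i \<noteq> j\<close> by (auto elim: rtrancl_path.cases)
  have step: "{(i # ys) ! k, ys ! k} \<in> E \<and> v \<notin> {(i # ys) ! k, ys ! k}"
    if "k < length ys" for k
    using rtrancl_path_nth[OF p that] unfolding r_def adj_rel_def del_vertex_E_def by auto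
  have viE: "{v, i} \<in> E" and vjE: "{j, v} \<in> E"
    using iN jN unfolding neighbours_def by (auto simp: insert_commute)
  have "v \<noteq> i" using simple_graph_edgeD[OF sg viE] by simp
  moreover have "v \<notin> set ys" using step by (auto simp: in_set_conv_nth)
  ultimately have "distinct (v # i # ys)" using dis by simp
  moreover have "{(v # i # ys) ! t, (v # i # ys) ! ((t + 1) mod length (v # i # ys))} \<in> E"
    if t: "t < length (v # i # ys)" for t
  proof -
    consider "t = 0" | k where "t = Suc k" "k < length ys" | "t = Suc (length ys)"
      using t by (cases t) (auto simp: less_Suc_eq)
    then show ?thesis
    proof cases
      case 1
      then show ?thesis using viE by simp
    next
      case 2
      then show ?thesis using step[of k] by simp
    next
      case 3
      have "(v # i # ys) ! t = j"
        using 3 rtrancl_path_last[OF p ys] ys by (simp add: last_conv_nth)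
      then show ?thesis using 3 vjE by simp
    qed
  qed
  moreover have "3 \<le> length (v # i # ys)" using ys by (cases ys) auto
  ultimately have "has_cycle E" unfolding has_cycle_def by blast
  then show False using nc by simp
qed

lemma tree_separating_vertex:
  assumes "is_tree V E" and "v \<in> V"
  shows "separating_vertex E v (comp_V (del_vertex_V V v) (del_vertex_E E v))"
proof -
  define E' where "E' = del_vertex_E E v"
  define C where "C = comp_V (del_vertex_V V v) E'"
  have sg: "simple_graph V E" and conn: "connected_graph V E" and nc: "\<not> has_cycle E"
    using assms(1) unfolding is_tree_def by auto
  have edge: "\<exists>x y. x \<noteq> y \<and> x \<in> V \<and> y \<in> V \<and> e = {x, y}" if "e \<in> E" for e
    using sg that unfolding simple_graph_def by blast
  have C: "u \<in> C i \<longleftrightarrow> u \<in> V \<and> u \<noteq> v \<and> (i, u) \<in> (adj_rel E')\<^sup>*" for i u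
    unfolding C_def comp_V_def del_vertex_V_def by simp
  show ?thesis
  proof (unfold_locales, fold E'_def, fold C_def)
    have "E \<subseteq> Pow V"
    proof
      fix e assume "e \<in> E"
      then obtain x y where "x \<in> V" "y \<in> V" "e = {x, y}" using edge by blast
      then show "e \<in> Pow V" by simp
    qed
    moreover have "finite V" using sg unfolding simple_graph_def by simp
    ultimately show "finite E" by (simp add: finite_subset)
  next
    show "\<exists>x y. x \<noteq> y \<and> e = {x, y}" if "e \<in> E" for e using edge[OF that] by blast
  next
    fix e assume eE': "e \<in> E'"
    have e: "e \<in> E" "v \<notin> e" using eE' unfolding E'_def del_vertex_E_def by auto
    then obtain x y where xy: "x \<in> V" "y \<in> V" "e = {x, y}"
      using edge[OF e(1)] by blast
    then have xy_v: "x \<noteq> v" "y \<noteq> v" using e(2) by auto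
    have "(x, v) \<in> (adj_rel E)\<^sup>*" using conn xy(1) assms(2) unfolding connected_graph_def by simp
    then obtain i where i: "i \<in> neighbours E v" and ix: "(i, x) \<in> (adj_rel E')\<^sup>*"
      using reaches_via_neighbour[OF _ xy_v(1)] unfolding E'_def by blast
    have "(x, y) \<in> adj_rel E'" using eE' xy(3) unfolding adj_rel_def by simp
    with ix have "(i, y) \<in> (adj_rel E')\<^sup>*" by (rule rtrancl_into_rtrancl)
    with ix xy xy_v have "e \<subseteq> C i" by (simp add: C)
    with i show "\<exists>i\<in>neighbours E v. e \<subseteq> C i" by blast
  next
    fix i assume "i \<in> neighbours E v"
    then have "{v, i} \<in> E" unfolding neighbours_def by simp
    then have "v \<noteq> i" "i \<in> V" using simple_graph_edgeD[OF sg] by simp_all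
    then show "i \<in> C i" unfolding C by auto
  next
    fix i j assume ij: "i \<in> neighbours E v" "j \<in> neighbours E v" "i \<noteq> j"
    show "C i \<inter> C j = {}"
    proof (rule ccontr)
      assume "C i \<inter> C j \<noteq> {}"
      then obtain x where "x \<in> C i" "x \<in> C j" by blast
      then have ix: "(i, x) \<in> (adj_rel E')\<^sup>*" and jx: "(j, x) \<in> (adj_rel E')\<^sup>*"
        unfolding C by simp_all
      from ix symD[OF sym_rtrancl[OF sym_adj_rel] jx] have "(i, j) \<in> (adj_rel E')\<^sup>*"
        by (rule rtrancl_trans)
      then show False using acyclic_neighbours_disconnected[OF sg nc ij] unfolding E'_def by simp
    qed
  qed
qed

theorem lemma2p5:
  fixes V :: "'a set" and E :: "'a set set" and v :: 'a
  assumes "is_tree V E" and "v \<in> V"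
  defines "d \<equiv> int (nu2 E) - int (nu2 (del_vertex_E E v))"
      and "Ti \<equiv> (\<lambda>w. comp_E (del_vertex_V V v) (del_vertex_E E v) w)"
  shows "d \<in> {0, 1, 2}
    \<and> (d = 2 \<longleftrightarrow> saturated_vertex E v)
    \<and> (d = 1 \<longleftrightarrow> (\<exists>j \<in> neighbours E v. saturated_edge E {v, j} \<and>
                    (\<forall>i \<in> neighbours E v - {j}. saturated_vertex (Ti i) i)))
    \<and> (d = 0 \<longleftrightarrow> (\<forall>i \<in> neighbours E v. saturated_vertex (Ti i) i))"
proof -
  interpret separating_vertex E v "comp_V (del_vertex_V V v) (del_vertex_E E v)"
    using tree_separating_vertex[OF assms(1,2)] .
  have "Ti = branch" unfolding Ti_def branch_def comp_E_def by simp
  then show ?thesis unfolding d_def by (simp only: nu2_del_vertex_diff)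
qed

end
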